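(* Let $\langle Q,A,\delta,\{q_0\},F\rangle$ be a transitive group automaton, $k\in\mathbb{N}$, and let $Q'\subseteq Q_k$ be a set of states of the $k$-digit buffer as provided by Lemma 4.2 (closed under $\delta_k$, transitive, meeting $F_k$, and containing every word of $A^k$ in second coordinates). Consider the augmented system $\widetilde{X}=A^{\mathbb{N}}\times Q'$ with $\widetilde{T}(x,s)=(Tx,\delta_k(s,x_1))$ and the measure $\tilde\mu$ determined by $\tilde\mu(C_w\times\{s\})=(\#A)^{-|w|}/\#Q'$ for $w\in A^*$, $s\in Q'$. Then $\widetilde{T}$ preserves $\tilde\mu$, i.e. $\tilde\mu(\widetilde{T}^{-1}E)=\tilde\mu(E)$ for every measurable $E\subseteq\widetilde{X}$.
   Context: $T$ is the shift on $A^{\mathbb{N}}$, $(Tx)_i=x_{i+1}$; $C_w=\{x\in A^{\mathbb{N}}: x[1..|w|]=w\}$ is the cylinder set of $w$, and $\mu(C_w)=(\#A)^{-|w|}$ defines the uniform Bernoulli measure; cylinder sets $C_w\times\{s\}$ generate the $\sigma$-algebra on $\widetilde{X}$. A group automaton is a deterministic automaton in which each symbol induces a permutation of the states; transitive means any state can reach any other by some word. The $k$-digit buffer has states $Q_k=Q\times A^k$, final states $F_k=F\times A^k$, and transitions $\delta_k((q,w),a)=(\delta(q,a),w)$ if $\delta(q,a)\notin F$, and $\delta_k((q,w),a)=(\delta(q,a),w[2..k]a)$ if $\delta(q,a)\in F$. *)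

theory Defs
  imports "HOL-Probability.Probability"
begin

text \<open>Infinite words x :: nat => 'a are indexed
  from 0, so the paper's x_1 is x 0.\<close>

definition group_automaton :: "('q \<Rightarrow> 'a \<Rightarrow> 'q) \<Rightarrow> bool" where
  "group_automaton \<delta> \<longleftrightarrow> (\<forall>a. bij (\<lambda>q. \<delta> q a))"

definition transitive_automaton :: "('q \<Rightarrow> 'a \<Rightarrow> 'q) \<Rightarrow> bool" where
  "transitive_automaton \<delta> \<longleftrightarrow> (\<forall>p q. \<exists>w. foldl \<delta> p w = q)"

text \<open>k-digit buffer: states (q, w) with w a word of length k (a list).
  The update w[2..k]a is tl (w @ [a]) (for k = 0 this keeps the empty word).\<close>

definition buffer_delta :: "('q \<Rightarrow> 'a \<Rightarrow> 'q) \<Rightarrow> 'q set \<Rightarrow> ('q \<times> 'a list) \<Rightarrow> 'a \<Rightarrow> ('q \<times> 'a list)" where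
  "buffer_delta \<delta> F s a =
     (if \<delta> (fst s) a \<notin> F then (\<delta> (fst s) a, snd s)
      else (\<delta> (fst s) a, tl (snd s @ [a])))"

definition buffer_states :: "nat \<Rightarrow> ('q \<times> 'a list) set" where
  "buffer_states k = {s. length (snd s) = k}"

definition buffer_final :: "'q set \<Rightarrow> nat \<Rightarrow> ('q \<times> 'a list) set" where
  "buffer_final F k = {s. fst s \<in> F \<and> length (snd s) = k}"

definition shift :: "(nat \<Rightarrow> 'a) \<Rightarrow> (nat \<Rightarrow> 'a)" where
  "shift x = (\<lambda>i. x (Suc i))"

definition cylinder :: "'a list \<Rightarrow> (nat \<Rightarrow> 'a) set" where
  "cylinder w = {x. \<forall>i<length w. x i = w ! i}"

definition aug_map :: "('q \<Rightarrow> 'a \<Rightarrow> 'q) \<Rightarrow> 'q set \<Rightarrow> (nat \<Rightarrow> 'a) \<times> ('q \<times> 'a list) \<Rightarrow> (nat \<Rightarrow> 'a) \<times> ('q \<times> 'a list)" where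
  "aug_map \<delta> F p = (shift (fst p), buffer_delta \<delta> F (snd p) (fst p 0))"

definition aug_space :: "('q \<times> 'a list) set \<Rightarrow> ((nat \<Rightarrow> 'a) \<times> ('q \<times> 'a list)) measure" where
  "aug_space Q' = (\<Pi>\<^sub>M i\<in>(UNIV::nat set). count_space (UNIV::'a set)) \<Otimes>\<^sub>M count_space Q'"

end

theory Submission
  imports Defs
begin

text \<open>
  Since every letter acts bijectively on Q, a state t of the k-digit buffer has at most #A
  incoming labelled edges (s, a): the letter read, and the digit shifted out of the buffer
  when a final state is entered, determine s.  Inside the closed set Q' there are #A * #Q'
  edges in total, so every t in Q' has exactly #A of them.  The preimage of C_w x {t} under
  the augmented map is the disjoint union of the cylinders C_(aw) x {s} over these edges,
  hence has measure #A * (#A)^(-|w|-1) / #Q' = #A^(-|w|) / #Q'.  These cylinders generate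
  the sigma-algebra, are closed under intersection and cover the space by finitely many sets
  of finite measure, so the measure and its image coincide.
\<close>

lemma card_fibre_eq_of_le:
  assumes "finite X" and "finite S" and "f ` X \<subseteq> S" and "card X = n * card S"
    and le: "\<And>t. t \<in> S \<Longrightarrow> card {x \<in> X. f x = t} \<le> n" and "t \<in> S"
  shows "card {x \<in> X. f x = t} = n"
proof (rule sum_mono_inv[where g = "\<lambda>_. n", OF _ le \<open>t \<in> S\<close> \<open>finite S\<close>])
  have "(\<Sum>t\<in>S. card {x \<in> X. f x = t}) = card X"
    using sum.group[OF assms(1-3), of "\<lambda>_. 1"] by (simp only: card_eq_sum)
  then show "(\<Sum>t\<in>S. card {x \<in> X. f x = t}) = (\<Sum>t\<in>S. n)"
    using assms(4) by simp
qed

lemma buffer_delta_fibre_card_le: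
  fixes \<delta> :: "'q \<Rightarrow> 'a::finite \<Rightarrow> 'q"
  assumes "group_automaton \<delta>"
  shows "card {(s, a). s \<in> S \<and> buffer_delta \<delta> F s a = t} \<le> CARD('a)"
proof -
  let ?P = "{(s, a). s \<in> S \<and> buffer_delta \<delta> F s a = t}"
  have inj\<delta>: "inj (\<lambda>q. \<delta> q a)" for a
    using assms bij_is_inj unfolding group_automaton_def by blast
  \<comment> \<open>If t is final, hd and tl of w @ [a] are known; otherwise the buffer is unchanged.\<close>
  let ?g = "\<lambda>((q, w), a). if fst t \<in> F then hd (w @ [a]) else a"
  have "inj_on ?g ?P"
  proof (rule inj_onI)
    fix x y assume x: "x \<in> ?P" and y: "y \<in> ?P" and g: "?g x = ?g y"
    obtain q1 w1 a1 q2 w2 a2 where xy: "x = ((q1, w1), a1)" "y = ((q2, w2), a2)"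
      by (metis prod.collapse)
    have 1: "buffer_delta \<delta> F (q1, w1) a1 = t" and 2: "buffer_delta \<delta> F (q2, w2) a2 = t"
      using x y xy by auto
    have q: "\<delta> q1 a1 = fst t" "\<delta> q2 a2 = fst t"
      using 1 2 by (auto simp: buffer_delta_def split: if_splits)
    have "w1 = w2 \<and> a1 = a2"
    proof (cases "fst t \<in> F")
      case True
      then have "tl (w1 @ [a1]) = tl (w2 @ [a2])" "hd (w1 @ [a1]) = hd (w2 @ [a2])"
        using 1 2 g q xy by (auto simp: buffer_delta_def prod_eq_iff)
      then have "w1 @ [a1] = w2 @ [a2]"
        by (intro list.expand) auto
      then show ?thesis by simp
    next
      case False
      then show ?thesis
        using 1 2 g q xy by (auto simp: buffer_delta_def prod_eq_iff)
    qed
    moreover have "q1 = q2"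
      using q calculation inj\<delta> by (metis injD)
    ultimately show "x = y" using xy by simp
  qed
  then show ?thesis
    by (rule card_inj_on_le) auto
qed

lemma buffer_delta_in_degree:
  fixes \<delta> :: "'q \<Rightarrow> 'a::finite \<Rightarrow> 'q"
  assumes "group_automaton \<delta>" and "finite Q'"
    and closed: "\<forall>s\<in>Q'. \<forall>a. buffer_delta \<delta> F s a \<in> Q'" and "t \<in> Q'"
  shows "card {(s, a). s \<in> Q' \<and> buffer_delta \<delta> F s a = t} = CARD('a)"
proof -
  have "{(s, a). s \<in> Q' \<and> buffer_delta \<delta> F s a = t}
      = {p \<in> Q' \<times> UNIV. case_prod (buffer_delta \<delta> F) p = t}" for t
    by auto
  moreover have "card {p \<in> Q' \<times> UNIV. case_prod (buffer_delta \<delta> F) p = t} = CARD('a)"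
  proof (rule card_fibre_eq_of_le)
    show "card (Q' \<times> (UNIV :: 'a set)) = CARD('a) * card Q'"
      by (simp add: card_cartesian_product)
    show "card {p \<in> Q' \<times> UNIV. case_prod (buffer_delta \<delta> F) p = t} \<le> CARD('a)" for t
      using buffer_delta_fibre_card_le[OF assms(1), of Q' F t] calculation by simp
  qed (use assms closed in auto)
  ultimately show ?thesis by simp
qed

lemma finite_buffer_states: "finite (buffer_states k :: ('q::finite \<times> 'a::finite list) set)"
proof -
  have "buffer_states k = (UNIV :: 'q set) \<times> {w :: 'a list. length w = k}"
    by (auto simp: buffer_states_def)
  then show ?thesis
    using finite_lists_length_eq[of "UNIV :: 'a set" k] by simp
qed

lemma cylinder_Nil: "cylinder [] = UNIV"
  by (simp add: cylinder_def)

lemma cylinder_Cons: "cylinder (a # w) = {x. x 0 = a \<and> shift x \<in> cylinder w}"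
  by (auto simp: cylinder_def shift_def All_less_Suc2)

lemma cylinder_Int_cylinder:
  assumes "length u \<le> length v" and "cylinder u \<inter> cylinder v \<noteq> {}"
  shows "cylinder u \<inter> cylinder v = cylinder v"
proof -
  obtain x where "x \<in> cylinder u" "x \<in> cylinder v"
    using assms(2) by blast
  then have "\<forall>i<length u. u ! i = v ! i"
    using assms(1) by (auto simp: cylinder_def)
  then show ?thesis
    using assms(1) by (auto simp: cylinder_def)
qed

lemma Int_stable_cylinders: "Int_stable (insert {} (range cylinder))"
proof (rule Int_stableI)
  have "cylinder u \<inter> cylinder v \<in> insert {} (range cylinder)" for u v :: "'a list"
    using cylinder_Int_cylinder[of u v] cylinder_Int_cylinder[of v u]
    by (cases "length u \<le> length v") (auto simp: Int_commute)
  then show "a \<inter> b \<in> insert {} (range cylinder)"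
    if "a \<in> insert {} (range cylinder)" "b \<in> insert {} (range cylinder)" for a b :: "(nat \<Rightarrow> 'a) set"
    using that by auto
qed

lemma cylinder_in_sets_PiM: "cylinder w \<in> sets (\<Pi>\<^sub>M i\<in>UNIV. count_space UNIV)"
proof -
  have "cylinder w = {x \<in> space (\<Pi>\<^sub>M i\<in>UNIV. count_space UNIV). \<forall>i<length w. x i = w ! i}"
    by (simp add: cylinder_def space_PiM)
  also have "\<dots> \<in> sets (\<Pi>\<^sub>M i\<in>UNIV. count_space UNIV)"
    by measurable
  finally show ?thesis .
qed

lemma sets_PiM_cylinders:
  "sets (\<Pi>\<^sub>M i\<in>UNIV. count_space (UNIV :: 'a::countable set)) = sigma_sets UNIV (insert {} (range cylinder))"
proof -
  have "sets (\<Pi>\<^sub>M i\<in>UNIV. count_space (UNIV :: 'a set)) = sigma_sets UNIV {{f. f i \<in> B} | i B. True}"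
    by (simp add: sets_PiM_single)
  also have "\<dots> = sigma_sets UNIV (insert {} (range cylinder))"
  proof (rule sigma_sets_eqI)
    fix a :: "(nat \<Rightarrow> 'a) set" assume "a \<in> {{f. f i \<in> B} | i B. True}"
    then obtain i B where a: "a = {f. f i \<in> B}" by blast
    have "a = \<Union> (cylinder ` {w. length w = Suc i \<and> w ! i \<in> B})"
    proof (intro set_eqI iffI)
      fix x assume "x \<in> a"
      then show "x \<in> \<Union> (cylinder ` {w. length w = Suc i \<and> w ! i \<in> B})"
        unfolding a by (intro UN_I[of "map x [0..<Suc i]"]) (auto simp: cylinder_def simp del: upt_Suc)
    qed (auto simp: a cylinder_def)
    also have "\<dots> \<in> sigma_sets UNIV (insert {} (range cylinder))"
      by (intro sigma_sets_UNION) auto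
    finally show "a \<in> sigma_sets UNIV (insert {} (range cylinder))" .
  next
    fix b :: "(nat \<Rightarrow> 'a) set" assume "b \<in> insert {} (range cylinder)"
    then show "b \<in> sigma_sets UNIV {{f. f i \<in> B} | i B. True}"
      using cylinder_in_sets_PiM[where 'a='a] sigma_sets.Empty
      by (auto simp: sets_PiM_single)
  qed
  finally show ?thesis .
qed

lemma sigma_sets_singletons:
  assumes "countable S"
  shows "sigma_sets S ((\<lambda>s. {s}) ` S) = Pow S"
proof
  show "sigma_sets S ((\<lambda>s. {s}) ` S) \<subseteq> Pow S"
    by (auto dest: sigma_sets_into_sp[rotated])
  show "Pow S \<subseteq> sigma_sets S ((\<lambda>s. {s}) ` S)"
  proof
    fix B assume B: "B \<in> Pow S"
    then have "countable B"
      using assms countable_subset by blast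
    then have "\<Union> ((\<lambda>s. {s}) ` B) \<in> sigma_sets S ((\<lambda>s. {s}) ` S)"
      using B by (intro sigma_sets_UNION) auto
    then show "B \<in> sigma_sets S ((\<lambda>s. {s}) ` S)"
      by simp
  qed
qed

lemma space_aug_space: "space (aug_space Q') = UNIV \<times> Q'"
  by (simp add: aug_space_def space_pair_measure space_PiM)

\<comment> \<open>The empty set is included so that the family is closed under intersection.\<close>
definition aug_generator :: "('q \<times> 'a list) set \<Rightarrow> ((nat \<Rightarrow> 'a) \<times> ('q \<times> 'a list)) set set" where
  "aug_generator Q' = {a \<times> {s} | a s. a \<in> insert {} (range cylinder) \<and> s \<in> Q'}"

lemma sets_aug_space:
  fixes Q' :: "('q \<times> 'a::countable list) set"
  assumes "countable Q'"
  shows "sets (aug_space Q') = sigma_sets (UNIV \<times> Q') (aug_generator Q')"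
proof -
  have "sets (aug_space Q') = sets (sigma
      (space (\<Pi>\<^sub>M i\<in>UNIV. count_space (UNIV :: 'a set)) \<times> space (count_space Q'))
      {a \<times> b | a b. a \<in> insert {} (range cylinder) \<and> b \<in> (\<lambda>s. {s}) ` Q'})"
    unfolding aug_space_def
    by (rule sets_pair_eq[where Ca = "{cylinder []}" and Cb = "(\<lambda>s. {s}) ` Q'"])
      (auto simp: space_PiM sets_PiM_cylinders sigma_sets_singletons[OF assms] cylinder_Nil assms
        intro: range_eqI[where x = "[]"])
  also have "\<dots> = sigma_sets (UNIV \<times> Q') (aug_generator Q')"
  proof -
    have "{a \<times> b | a b. a \<in> insert {} (range cylinder) \<and> b \<in> (\<lambda>s. {s}) ` Q'} = aug_generator Q'"
      by (auto simp: aug_generator_def)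
    moreover have "aug_generator Q' \<subseteq> Pow (UNIV \<times> Q')"
      by (auto simp: aug_generator_def)
    ultimately show ?thesis
      by (simp add: space_PiM)
  qed
  finally show ?thesis .
qed

lemma Int_stable_aug_generator: "Int_stable (aug_generator Q')"
proof (rule Int_stableI)
  fix X Y assume "X \<in> aug_generator Q'" "Y \<in> aug_generator Q'"
  then obtain a b s t where X: "X = a \<times> {s}" and Y: "Y = b \<times> {t}" and "s \<in> Q'"
    and ab: "a \<in> insert {} (range cylinder)" "b \<in> insert {} (range cylinder)"
    unfolding aug_generator_def by blast
  have "X \<inter> Y = (if s = t then a \<inter> b else {}) \<times> {s}"
    by (auto simp: X Y)
  moreover have "(if s = t then a \<inter> b else {}) \<in> insert {} (range cylinder)"
    using Int_stableD[OF Int_stable_cylinders ab] by simp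
  ultimately show "X \<inter> Y \<in> aug_generator Q'"
    using \<open>s \<in> Q'\<close> unfolding aug_generator_def by blast
qed

lemma measurable_aug_map:
  fixes \<delta> :: "'q \<Rightarrow> 'a::countable \<Rightarrow> 'q" and Q' :: "('q \<times> 'a list) set"
  assumes "countable Q'" and closed: "\<forall>s\<in>Q'. \<forall>a. buffer_delta \<delta> F s a \<in> Q'"
  shows "aug_map \<delta> F \<in> measurable (aug_space Q') (aug_space Q')"
proof -
  have shift: "(\<lambda>p. shift (fst p)) \<in> measurable (aug_space Q') (\<Pi>\<^sub>M i\<in>UNIV. count_space UNIV)"
    unfolding shift_def
    by (rule measurable_PiM_single') (auto simp: aug_space_def space_PiM)
  have "(\<lambda>p. (fst p 0, snd p)) \<in> measurable (aug_space Q') (count_space UNIV \<Otimes>\<^sub>M count_space Q')"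
    unfolding aug_space_def by measurable
  also have "count_space (UNIV :: 'a set) \<Otimes>\<^sub>M count_space Q' = count_space (UNIV \<times> Q')"
    using assms(1) by (intro pair_measure_countable countable_SIGMA countableI_type)
  finally have "(\<lambda>(a, s). buffer_delta \<delta> F s a) \<circ> (\<lambda>p. (fst p 0, snd p))
      \<in> measurable (aug_space Q') (count_space Q')"
    by (rule measurable_comp) (use closed in auto)
  then have "(\<lambda>p. buffer_delta \<delta> F (snd p) (fst p 0)) \<in> measurable (aug_space Q') (count_space Q')"
    by (simp add: comp_def)
  with shift show ?thesis
    unfolding aug_map_def[abs_def] aug_space_def by (rule measurable_Pair)
qed

lemma vimage_aug_map_cylinder:
  "aug_map \<delta> F -` (cylinder w \<times> {t}) \<inter> (UNIV \<times> Q')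
   = (\<Union>(s, a)\<in>{(s, a). s \<in> Q' \<and> buffer_delta \<delta> F s a = t}. cylinder (a # w) \<times> {s})"
  by (auto simp: aug_map_def cylinder_Cons)

lemma distr_self_eqI_generator:
  assumes f: "f \<in> measurable M M"
    and E: "Int_stable E" "sets M = sigma_sets (space M) E"
    and A: "A \<subseteq> E" "countable A" "\<Union>A = space M" "\<And>a. a \<in> A \<Longrightarrow> emeasure M a \<noteq> \<infinity>"
    and eq: "\<And>X. X \<in> E \<Longrightarrow> emeasure M (f -` X \<inter> space M) = emeasure M X"
  shows "distr M M f = M"
proof (rule measure_eqI_generator_eq_countable[OF E(1) _ _ _ E(2) A(1,3,2)])
  have "E \<subseteq> sets M"
    using E(2) by auto
  then show "E \<subseteq> Pow (space M)"
    using sets.sets_into_space by blast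
  show "emeasure (distr M M f) X = emeasure M X" if "X \<in> E" for X
    using \<open>E \<subseteq> sets M\<close> that by (subst emeasure_distr[OF f]) (auto simp: eq)
  show "sets (distr M M f) = sigma_sets (space M) E"
    using E(2) by simp
  show "emeasure (distr M M f) a \<noteq> \<infinity>" if "a \<in> A" for a
    using \<open>E \<subseteq> sets M\<close> A(1,4) that by (subst emeasure_distr[OF f]) (auto simp: eq)
qed

lemma emeasure_vimage_aug_map_cylinder:
  fixes \<delta> :: "'q \<Rightarrow> 'a::finite \<Rightarrow> 'q" and Q' :: "('q \<times> 'a list) set"
  assumes group: "group_automaton \<delta>" and fin: "finite Q'"
    and closed: "\<forall>s\<in>Q'. \<forall>a. buffer_delta \<delta> F s a \<in> Q'"
    and sets_M: "sets M = sets (aug_space Q')"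
    and cyl: "\<forall>w s. s \<in> Q' \<longrightarrow>
       emeasure M (cylinder w \<times> {s}) = ennreal (1 / (real CARD('a) ^ length w * real (card Q')))"
    and t: "t \<in> Q'"
  shows "emeasure M (aug_map \<delta> F -` (cylinder w \<times> {t}) \<inter> space M) = emeasure M (cylinder w \<times> {t})"
proof -
  let ?P = "{(s, a). s \<in> Q' \<and> buffer_delta \<delta> F s a = t}"
  let ?C = "\<lambda>(s, a). cylinder (a # w) \<times> {s}"
  have "space M = UNIV \<times> Q'"
    using sets_eq_imp_space_eq[OF sets_M] by (simp add: space_aug_space)
  then have "emeasure M (aug_map \<delta> F -` (cylinder w \<times> {t}) \<inter> space M) = emeasure M (\<Union> (?C ` ?P))"
    by (simp add: vimage_aug_map_cylinder)
  also have "\<dots> = (\<Sum>p\<in>?P. emeasure M (?C p))"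
  proof (rule sum_emeasure[symmetric])
    show "?C ` ?P \<subseteq> sets M"
      unfolding sets_M aug_space_def by (auto intro!: pair_measureI cylinder_in_sets_PiM)
    show "disjoint_family_on ?C ?P"
      by (auto simp: disjoint_family_on_def cylinder_Cons)
    show "finite ?P"
      by (rule finite_subset[of _ "Q' \<times> UNIV"]) (auto simp: fin)
  qed
  also have "\<dots> = (\<Sum>p\<in>?P. ennreal (1 / (real CARD('a) ^ Suc (length w) * real (card Q'))))"
    using cyl by (intro sum.cong) auto
  also have "\<dots> = ennreal (real CARD('a) * (1 / (real CARD('a) ^ Suc (length w) * real (card Q'))))"
    unfolding sum_constant buffer_delta_in_degree[OF group fin closed t] ennreal_of_nat_eq_real_of_nat
    by (subst ennreal_mult) auto
  also have "real CARD('a) * (1 / (real CARD('a) ^ Suc (length w) * real (card Q')))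
      = 1 / (real CARD('a) ^ length w * real (card Q'))"
    by simp
  also have "ennreal \<dots> = emeasure M (cylinder w \<times> {t})"
    using cyl t by metis
  finally show ?thesis .
qed

theorem lemma4p3:
  fixes \<delta> :: "'q::finite \<Rightarrow> 'a::finite \<Rightarrow> 'q"
    and F :: "'q set" and k :: nat
    and Q' :: "('q \<times> 'a list) set"
    and M :: "((nat \<Rightarrow> 'a) \<times> ('q \<times> 'a list)) measure"
  assumes group: "group_automaton \<delta>"
    and trans: "transitive_automaton \<delta>"
    and sub: "Q' \<subseteq> buffer_states k"
    and closed: "\<forall>s\<in>Q'. \<forall>a. buffer_delta \<delta> F s a \<in> Q'"
    and trans': "\<forall>s\<in>Q'. \<forall>t\<in>Q'. \<exists>w. foldl (buffer_delta \<delta> F) s w = t"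
    and meets: "Q' \<inter> buffer_final F k \<noteq> {}"
    and words: "\<forall>w::'a list. length w = k \<longrightarrow> (\<exists>q. (q, w) \<in> Q')"
    and sets_M: "sets M = sets (aug_space Q')"
    and cyl: "\<forall>w s. s \<in> Q' \<longrightarrow>
       emeasure M (cylinder w \<times> {s})
         = ennreal (1 / (real CARD('a) ^ length w * real (card Q')))"
  shows "aug_map \<delta> F \<in> measurable M M \<and>
         (\<forall>E\<in>sets M. emeasure M (aug_map \<delta> F -` E \<inter> space M) = emeasure M E)"
proof -
  have fin: "finite Q'"
    using sub finite_buffer_states by (rule finite_subset)
  have space: "space M = UNIV \<times> Q'"
    using sets_eq_imp_space_eq[OF sets_M] by (simp add: space_aug_space)
  have meas: "aug_map \<delta> F \<in> measurable M M"
    using measurable_aug_map[OF countable_finite[OF fin] closed]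
    by (simp add: measurable_cong_sets[OF sets_M sets_M])
  have "distr M M (aug_map \<delta> F) = M"
  proof (rule distr_self_eqI_generator[OF meas Int_stable_aug_generator])
    show "sets M = sigma_sets (space M) (aug_generator Q')"
      using sets_M sets_aug_space[OF countable_finite[OF fin]] space by simp
    show "(\<lambda>s. cylinder [] \<times> {s}) ` Q' \<subseteq> aug_generator Q'"
      unfolding aug_generator_def by blast
    show "\<Union> ((\<lambda>s. cylinder [] \<times> {s}) ` Q') = space M"
      by (auto simp: space cylinder_Nil)
    show "emeasure M X \<noteq> \<infinity>" if "X \<in> (\<lambda>s. cylinder [] \<times> {s}) ` Q'" for X
      using that cyl by auto
    show "emeasure M (aug_map \<delta> F -` X \<inter> space M) = emeasure M X" if "X \<in> aug_generator Q'" for X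
      using that emeasure_vimage_aug_map_cylinder[OF group fin closed sets_M cyl]
      by (auto simp: aug_generator_def)
  qed (use fin in auto)
  then show ?thesis
    using meas emeasure_distr[OF meas] by (metis (no_types, lifting))
qed

end
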